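(* Let $A_n(x) = x^n + a_1 x^{n-1} + \dots + a_n$ be a (complex) polynomial whose distinct roots $x_1, \dots, x_m$ have known multiplicities $\alpha_1, \dots, \alpha_m$ (positive integers with $\alpha_1 + \dots + \alpha_m = n$). Given initial approximations $x_1^{[0]}, \dots, x_m^{[0]}$, define iterates for $k = 0,1,2,\dots$ and $i = 1,\dots,m$ by $$x_i^{[k+1]} = x_i^{[k]} - \alpha_i \left[ S_i^{[k]}(x_i^{[k]}) + \sum_{j=1, j\neq i}^{m} \alpha_j \,(x_j^{[k]} - x_i^{[k]})^{-2}\, A_n(x_j^{[k]}) \left[ \frac{S_j^{[k]}(x_j^{[k]})}{\alpha_j}\right]^{\alpha_j - 1} \Big/ Q_j^{[k]}(x_j^{[k]}) \right]^{-1},$$ where for $p = 1,\dots,m$, $$Q_p^{[k]}(x) = \prod_{l=1, l\neq p}^{m} (x - x_l^{[k]})^{\alpha_l}, \qquad S_p^{[k]}(x) = \frac{A_n'(x)}{A_n(x)} - \frac{Q_p^{[k]\prime}(x)}{Q_p^{[k]}(x)}.$$ Let $d = \min_{i\neq j} |x_i - x_j|$, and let $c, q$ be real positive constants such that $q < 1$, $d - 2c > 0$, and $$2c^2 n (d-2c)^{-2}\Big[ c(d-2c)^{-1} + \big(1 + c(d-2c)^{-1}\big)\,[N + MN + M] \Big] < \alpha_i \quad \text{for all } i = 1,\dots,m,$$ where $M = \big(1 + c/(d-2c)\big)^n - 1$ and $N = \big(1 + n\,(c/(d-2c))^2\big)^{n-1} - 1$. Suppose the initial approximations satisfy $|x_i^{[0]}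 - x_i| < cq$ for $i = 1,\dots,m$. Then for every natural number $k$, $$|x_i^{[k]} - x_i| < c\, q^{4^k}, \qquad i = 1,\dots,m.$$
   Context: The iteration is understood in the sense that all quantities appearing in the formula are defined (the relevant denominators are nonzero). $Q_p^{[k]\prime}$ denotes the derivative of $Q_p^{[k]}$ with respect to $x$, and $A_n'$ the derivative of $A_n$. *)

theory Defs
  imports Complex_Main "HOL-Computational_Algebra.Polynomial"
begin

text \<open>Indices of roots and approximations run over {..<m} (i.e. 0,...,m-1 instead of 1,...,m).
  An approximation vector is a function xk :: nat => complex.\<close>

definition Qpoly :: "nat \<Rightarrow> (nat \<Rightarrow> nat) \<Rightarrow> nat \<Rightarrow> (nat \<Rightarrow> complex) \<Rightarrow> complex poly" where
  "Qpoly m alpha p xk = (\<Prod>l\<in>{..<m} - {p}. [:- xk l, 1:] ^ alpha l)"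

definition Sfun :: "complex poly \<Rightarrow> nat \<Rightarrow> (nat \<Rightarrow> nat) \<Rightarrow> nat \<Rightarrow> (nat \<Rightarrow> complex) \<Rightarrow> complex \<Rightarrow> complex" where
  "Sfun A m alpha p xk x =
     poly (pderiv A) x / poly A x
     - poly (pderiv (Qpoly m alpha p xk)) x / poly (Qpoly m alpha p xk) x"

definition corr :: "complex poly \<Rightarrow> nat \<Rightarrow> (nat \<Rightarrow> nat) \<Rightarrow> nat \<Rightarrow> (nat \<Rightarrow> complex) \<Rightarrow> complex" where
  "corr A m alpha i xk =
     Sfun A m alpha i xk (xk i)
     + (\<Sum>j\<in>{..<m} - {i}.
          of_nat (alpha j) * inverse ((xk j - xk i) ^ 2) * poly A (xk j)
          * (Sfun A m alpha j xk (xk j) / of_nat (alpha j)) ^ (alpha j - 1)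
          / poly (Qpoly m alpha j xk) (xk j))"

definition step :: "complex poly \<Rightarrow> nat \<Rightarrow> (nat \<Rightarrow> nat) \<Rightarrow> (nat \<Rightarrow> complex) \<Rightarrow> (nat \<Rightarrow> complex)" where
  "step A m alpha xk = (\<lambda>i. xk i - of_nat (alpha i) * inverse (corr A m alpha i xk))"

primrec iter :: "complex poly \<Rightarrow> nat \<Rightarrow> (nat \<Rightarrow> nat) \<Rightarrow> (nat \<Rightarrow> complex) \<Rightarrow> nat \<Rightarrow> (nat \<Rightarrow> complex)" where
  "iter A m alpha x0 0 = x0"
| "iter A m alpha x0 (Suc k) = step A m alpha (iter A m alpha x0 k)"

definition step_defined :: "complex poly \<Rightarrow> nat \<Rightarrow> (nat \<Rightarrow> nat) \<Rightarrow> (nat \<Rightarrow> complex) \<Rightarrow> bool" where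
  "step_defined A m alpha xk \<longleftrightarrow>
     (\<forall>i<m. poly A (xk i) \<noteq> 0
          \<and> poly (Qpoly m alpha i xk) (xk i) \<noteq> 0
          \<and> (\<forall>j<m. j \<noteq> i \<longrightarrow> xk j \<noteq> xk i)
          \<and> corr A m alpha i xk \<noteq> 0)"

end

theory Submission
  imports Defs
begin

text \<open>
  Let e_j = x_j - r_j be the current errors, all below c t. Computing logarithmic derivatives of
  the factored polynomials gives S_j(x_j)/alpha_j = (1 + beta_j)/e_j with beta_j = O(t^2), and
  A(x_j)/Q_j(x_j) = e_j^alpha_j G_j with G_j = 1 + O(t), where G_j is the product of the ratios
  ((x_j - r_l)/(x_j - x_l))^alpha_l. Hence the quantity T_j entering the j-th summand of the
  correction equals e_j (1 + O(t)). On the other hand S_i(x_i) contains the terms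
  alpha_j/(x_i - r_j) - alpha_j/(x_i - x_j) = -alpha_j e_j/(x_i - x_j)^2 + O(t^2), whose first-order
  part cancels against the summand alpha_j T_j/(x_i - x_j)^2. So the correction is
  alpha_i/e_i + R_i with R_i = O(t^2), and the new error is e_i (e_i R_i)/(alpha_i + e_i R_i).
  The hypothesis on alpha_i bounds e_i R_i by t^3 alpha_i/2, which yields an error below c t^4;
  induction with t = q^(4^k) concludes. Below, beta_j, G_j, T_j and R_i are sfun_defect,
  cofactor_ratio, root_offset and corr_remainder.
\<close>

lemma poly_pderiv_linear_power:
  fixes a x :: "'a::field"
  assumes "x \<noteq> a"
  shows "poly (pderiv ([:-a, 1:] ^ k)) x = poly ([:-a, 1:] ^ k) x * (of_nat k / (x - a))"
proof (cases k)
  case (Suc j)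
  then have "poly (pderiv ([:-a, 1:] ^ k)) x = of_nat k * (x - a) ^ j"
    by (simp add: pderiv_power_Suc pderiv_pCons del: power_Suc)
  with Suc assms show ?thesis
    by (simp add: field_simps)
qed simp

lemma poly_pderiv_prod_linear_powers:
  fixes a :: "'i \<Rightarrow> 'a::field"
  assumes "finite S" "\<And>l. l \<in> S \<Longrightarrow> x \<noteq> a l"
  shows "poly (pderiv (\<Prod>l\<in>S. [:-a l, 1:] ^ k l)) x
       = poly (\<Prod>l\<in>S. [:-a l, 1:] ^ k l) x * (\<Sum>l\<in>S. of_nat (k l) / (x - a l))"
  using assms
proof (induction S rule: finite_induct)
  case (insert l S)
  then show ?case
    by (simp add: pderiv_mult poly_pderiv_linear_power algebra_simps)
qed simp

lemma logderiv_prod_linear_powers: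
  fixes a :: "'i \<Rightarrow> 'a::field"
  assumes "finite S" "\<And>l. l \<in> S \<Longrightarrow> x \<noteq> a l"
  shows "poly (pderiv (\<Prod>l\<in>S. [:-a l, 1:] ^ k l)) x / poly (\<Prod>l\<in>S. [:-a l, 1:] ^ k l) x
       = (\<Sum>l\<in>S. of_nat (k l) / (x - a l))"
proof -
  have "poly (\<Prod>l\<in>S. [:-a l, 1:] ^ k l) x \<noteq> 0"
    using assms by (simp add: poly_prod)
  then show ?thesis
    using poly_pderiv_prod_linear_powers[OF assms] by simp
qed

lemma poly_prod_linear_powers_eq_0_iff:
  fixes a :: "'i \<Rightarrow> 'a::field"
  assumes "finite S"
  shows "poly (\<Prod>l\<in>S. [:-a l, 1:] ^ k l) x = 0 \<longleftrightarrow> (\<exists>l\<in>S. x = a l \<and> k l > 0)"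
  using assms by (simp add: poly_prod)

lemma norm_mult_sub_one_le:
  fixes z w :: "'a::real_normed_algebra_1"
  assumes "norm (z - 1) \<le> a" "norm (w - 1) \<le> b"
  shows "norm (z * w - 1) \<le> (1 + a) * (1 + b) - 1"
proof -
  have "0 \<le> a"
    using assms(1) norm_ge_zero order_trans by blast
  have "z * w - 1 = (z - 1) * (w - 1) + (z - 1) + (w - 1)"
    by (simp add: algebra_simps)
  then have "norm (z * w - 1) \<le> norm (z - 1) * norm (w - 1) + norm (z - 1) + norm (w - 1)"
    by (metis add_mono norm_mult_ineq norm_triangle_le order_refl)
  also have "\<dots> \<le> a * b + a + b"
    using assms \<open>0 \<le> a\<close> by (intro add_mono mult_mono) auto
  finally show ?thesis
    by (simp add: algebra_simps)
qed

lemma norm_prod_sub_one_le: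
  fixes z :: "'i \<Rightarrow> 'a::{real_normed_algebra_1, comm_monoid_mult}"
  assumes "finite S" "\<And>l. l \<in> S \<Longrightarrow> norm (z l - 1) \<le> a l"
  shows "norm ((\<Prod>l\<in>S. z l) - 1) \<le> (\<Prod>l\<in>S. 1 + a l) - 1"
  using assms
proof (induction S rule: finite_induct)
  case (insert l S)
  then show ?case
    using norm_mult_sub_one_le[of "z l" "a l" "prod z S" "(\<Prod>l\<in>S. 1 + a l) - 1"] by simp
qed simp

lemma norm_power_sub_one_le:
  fixes z :: "'a::{real_normed_algebra_1, comm_monoid_mult}"
  assumes "norm (z - 1) \<le> a"
  shows "norm (z ^ k - 1) \<le> (1 + a) ^ k - 1"
  using norm_prod_sub_one_le[of "{..<k}" "\<lambda>_. z" "\<lambda>_. a"] assms by simp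

lemma one_plus_scaled_power_le:
  fixes x t :: real
  assumes "0 \<le> x" "0 \<le> t" "t \<le> 1"
  shows "(1 + t * x) ^ k \<le> 1 + t * ((1 + x) ^ k - 1)"
proof (induction k)
  case (Suc k)
  define P where "P = (1 + x) ^ k - 1"
  have "P \<ge> 0"
    unfolding P_def using assms by (simp add: one_le_power)
  have "(1 + t * x) ^ Suc k \<le> (1 + t * x) * (1 + t * P)"
    using Suc assms unfolding P_def by (auto intro: mult_left_mono)
  also have "\<dots> = 1 + t * P + t * x + t * (t * x * P)"
    by (simp add: algebra_simps)
  also have "\<dots> \<le> 1 + t * P + t * x + t * x * P"
    using assms \<open>P \<ge> 0\<close> by (simp add: mult_left_le_one_le)
  also have "\<dots> = 1 + t * ((1 + x) ^ Suc k - 1)"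
    unfolding P_def by (simp add: algebra_simps)
  finally show ?case .
qed simp

lemma norm_perturbed_newton_error_le:
  fixes e R :: "'a::real_normed_field" and a B \<tau> :: real
  assumes "e \<noteq> 0" "norm (e * R) \<le> \<tau> * B" "0 \<le> \<tau>" "\<tau> \<le> 1" "0 \<le> B" "2 * B < a"
  shows "norm (e - of_real a * inverse (of_real a / e + R)) \<le> \<tau> * norm e"
proof -
  have "\<tau> * B \<le> B"
    using assms by (simp add: mult_left_le_one_le)
  have "B < norm (of_real a + e * R)"
    using norm_diff_ineq[of "of_real a :: 'a" "e * R"] assms \<open>\<tau> * B \<le> B\<close> by simp
  then have nz: "of_real a + e * R \<noteq> 0"
    using assms(5) by auto
  have "e - of_real a * inverse (of_real a / e + R) = e * (e * R) / (of_real a + e * R)"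
    using assms(1) nz by (simp add: field_simps)
  then have "norm (e - of_real a * inverse (of_real a / e + R))
      = norm e * (norm (e * R) / norm (of_real a + e * R))"
    by (simp add: norm_mult norm_divide)
  also have "\<dots> \<le> norm e * \<tau>"
  proof (intro mult_left_mono)
    have "\<tau> * B \<le> \<tau> * norm (of_real a + e * R)"
      using \<open>B < _\<close> assms(3) by (intro mult_left_mono) auto
    then have "norm (e * R) \<le> \<tau> * norm (of_real a + e * R)"
      using assms(2) by linarith
    then show "norm (e * R) / norm (of_real a + e * R) \<le> \<tau>"
      using nz by (simp add: divide_le_eq)
  qed simp
  finally show ?thesis
    by (simp add: mult.commute)
qed

lemma pole_shift_expansion:
  fixes a u e T :: "'a::field"
  assumes "u \<noteq> 0" "u + e \<noteq> 0"
  shows "a / (u + e) - a / u + a / u^2 * T = a / u^2 * (T - e + e^2 / (u + e))"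
proof -
  have "e^2 / (u + e) - e = - (u * e) / (u + e)"
    using assms(2) by (simp add: field_simps power2_eq_square)
  moreover have "a / (u + e) - a / u = a / u^2 * (- (u * e) / (u + e))"
    using assms by (simp add: field_simps power2_eq_square)
  moreover have "a / u^2 * (T - e + e^2 / (u + e)) = a / u^2 * T + a / u^2 * (e^2 / (u + e) - e)"
    by (simp add: algebra_simps)
  ultimately show ?thesis
    by simp
qed

definition sfun_defect :: "nat \<Rightarrow> (nat \<Rightarrow> nat) \<Rightarrow> (nat \<Rightarrow> complex) \<Rightarrow> (nat \<Rightarrow> complex) \<Rightarrow> nat \<Rightarrow> complex" where
  "sfun_defect m alpha r x j = (x j - r j) / of_nat (alpha j) *
     (\<Sum>l\<in>{..<m}-{j}. of_nat (alpha l) / (x j - r l) - of_nat (alpha l) / (x j - x l))"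

definition cofactor_ratio :: "nat \<Rightarrow> (nat \<Rightarrow> nat) \<Rightarrow> (nat \<Rightarrow> complex) \<Rightarrow> (nat \<Rightarrow> complex) \<Rightarrow> nat \<Rightarrow> complex" where
  "cofactor_ratio m alpha r x j = (\<Prod>l\<in>{..<m}-{j}. ((x j - r l) / (x j - x l)) ^ alpha l)"

definition root_offset :: "complex poly \<Rightarrow> nat \<Rightarrow> (nat \<Rightarrow> nat) \<Rightarrow> (nat \<Rightarrow> complex) \<Rightarrow> nat \<Rightarrow> complex" where
  "root_offset A m alpha x j =
     poly A (x j) * (Sfun A m alpha j x (x j) / of_nat (alpha j)) ^ (alpha j - 1)
     / poly (Qpoly m alpha j x) (x j)"

definition corr_remainder :: "complex poly \<Rightarrow> nat \<Rightarrow> (nat \<Rightarrow> nat) \<Rightarrow> (nat \<Rightarrow> complex) \<Rightarrow> (nat \<Rightarrow> complex) \<Rightarrow> nat \<Rightarrow> complex" where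
  "corr_remainder A m alpha r x i = (\<Sum>j\<in>{..<m}-{i}. of_nat (alpha j) / (x i - x j)^2
     * (root_offset A m alpha x j - (x j - r j) + (x j - r j)^2 / (x i - r j)))"

locale approximation_step =
  fixes A :: "complex poly" and m n :: nat and alpha :: "nat \<Rightarrow> nat"
    and r x :: "nat \<Rightarrow> complex" and c t D M N :: real
  assumes alpha_pos: "\<And>i. i < m \<Longrightarrow> alpha i > 0"
    and n_def: "n = (\<Sum>i<m. alpha i)"
    and A_fact: "A = (\<Prod>i<m. [:- r i, 1:] ^ alpha i)"
    and c_pos: "c > 0" and t_pos: "t > 0" and t_le1: "t \<le> 1" and D_pos: "D > 0"
    and M_def: "M = (1 + c / D) ^ n - 1"
    and N_def: "N = (1 + real n * (c / D) ^ 2) ^ (n - 1) - 1"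
    and sep_xx: "\<And>i j. i < m \<Longrightarrow> j < m \<Longrightarrow> i \<noteq> j \<Longrightarrow> D \<le> cmod (x i - x j)"
    and sep_xr: "\<And>i j. i < m \<Longrightarrow> j < m \<Longrightarrow> i \<noteq> j \<Longrightarrow> D \<le> cmod (x i - r j)"
    and err: "\<And>i. i < m \<Longrightarrow> cmod (x i - r i) < c * t"
    and x_ne_own_root: "\<And>i. i < m \<Longrightarrow> x i \<noteq> r i"
begin

lemma err_le: "i < m \<Longrightarrow> cmod (x i - r i) \<le> c * t"
  using err less_imp_le by blast

lemma x_ne_r: assumes "j < m" "l < m" shows "x j \<noteq> r l"
proof (cases "j = l")
  case False
  then show ?thesis
    using sep_xr[OF assms] D_pos by auto
qed (use x_ne_own_root assms in simp)

lemma x_ne_x: assumes "j < m" "l < m" "l \<noteq> j" shows "x j \<noteq> x l"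
  using sep_xx[OF assms(1,2)] assms(3) D_pos by auto

lemma M_nonneg: "0 \<le> M"
  unfolding M_def using c_pos D_pos by (simp add: one_le_power)

lemma N_nonneg: "0 \<le> N"
  unfolding N_def by (simp add: one_le_power)

lemma sum_alpha_other_le: "(\<Sum>l\<in>{..<m}-{j}. alpha l) \<le> n"
  unfolding n_def by (rule sum_mono2) auto

lemma alpha_le_n: "j < m \<Longrightarrow> alpha j \<le> n"
  unfolding n_def by (intro member_le_sum) auto

lemma norm_weighted_sum_le:
  assumes "\<And>l. l \<in> {..<m}-{j} \<Longrightarrow> norm (f l) \<le> real (alpha l) * b" "0 \<le> b"
  shows "norm (\<Sum>l\<in>{..<m}-{j}. f l) \<le> real n * b"
proof -
  have "norm (\<Sum>l\<in>{..<m}-{j}. f l) \<le> (\<Sum>l\<in>{..<m}-{j}. real (alpha l) * b)"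
    using assms(1) by (rule sum_norm_le)
  also have "\<dots> = real (\<Sum>l\<in>{..<m}-{j}. alpha l) * b"
    by (simp add: sum_distrib_right)
  also have "\<dots> \<le> real n * b"
    using sum_alpha_other_le[of j] assms(2) by (intro mult_right_mono) (simp_all only: of_nat_le_iff)
  finally show ?thesis .
qed

lemma Sfun_eq:
  assumes "j < m"
  shows "Sfun A m alpha j x (x j) = of_nat (alpha j) / (x j - r j)
     + (\<Sum>l\<in>{..<m}-{j}. of_nat (alpha l) / (x j - r l) - of_nat (alpha l) / (x j - x l))"
proof -
  have "poly (pderiv A) (x j) / poly A (x j) = (\<Sum>l<m. of_nat (alpha l) / (x j - r l))"
    unfolding A_fact using x_ne_r assms by (intro logderiv_prod_linear_powers) auto
  also have "\<dots> = of_nat (alpha j) / (x j - r j) + (\<Sum>l\<in>{..<m}-{j}. of_nat (alpha l) / (x j - r l))"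
    using assms by (subst sum.remove[of _ j]) auto
  finally have logA: "poly (pderiv A) (x j) / poly A (x j)
      = of_nat (alpha j) / (x j - r j) + (\<Sum>l\<in>{..<m}-{j}. of_nat (alpha l) / (x j - r l))" .
  have logQ: "poly (pderiv (Qpoly m alpha j x)) (x j) / poly (Qpoly m alpha j x) (x j)
      = (\<Sum>l\<in>{..<m}-{j}. of_nat (alpha l) / (x j - x l))"
    unfolding Qpoly_def using x_ne_x assms by (intro logderiv_prod_linear_powers) auto
  show ?thesis
    unfolding Sfun_def logA logQ by (simp add: sum_subtractf)
qed

lemma Sfun_div_eq:
  assumes "j < m"
  shows "Sfun A m alpha j x (x j) / of_nat (alpha j) = (1 + sfun_defect m alpha r x j) / (x j - r j)"
  using x_ne_own_root[OF assms] alpha_pos[OF assms]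
  unfolding Sfun_eq[OF assms] sfun_defect_def by (simp add: field_simps)

lemma root_offset_eq:
  assumes "j < m"
  shows "root_offset A m alpha x j
       = (x j - r j) * (1 + sfun_defect m alpha r x j) ^ (alpha j - 1) * cofactor_ratio m alpha r x j"
proof -
  define e where "e = x j - r j"
  define Q where "Q = (\<Prod>l\<in>{..<m}-{j}. (x j - x l) ^ alpha l)"
  have "e \<noteq> 0" "Q \<noteq> 0"
    unfolding e_def Q_def using x_ne_own_root x_ne_x assms by auto
  have polyQ: "poly (Qpoly m alpha j x) (x j) = Q"
    unfolding Qpoly_def Q_def by (simp add: poly_prod)
  have "(\<Prod>l\<in>{..<m}-{j}. (x j - r l) ^ alpha l) = Q * cofactor_ratio m alpha r x j"
    unfolding Q_def cofactor_ratio_def prod.distrib[symmetric] power_mult_distrib[symmetric]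
    using x_ne_x assms by (intro prod.cong) auto
  then have polyA: "poly A (x j) = e ^ alpha j * (Q * cofactor_ratio m alpha r x j)"
    unfolding A_fact e_def using assms by (simp add: poly_prod prod.remove[of _ j])
  obtain b where b: "alpha j = Suc b"
    using alpha_pos[OF assms] gr0_implies_Suc by blast
  show ?thesis
    unfolding root_offset_def polyQ polyA Sfun_div_eq[OF assms] e_def[symmetric]
    using \<open>e \<noteq> 0\<close> \<open>Q \<noteq> 0\<close> b by (simp add: field_simps power_divide)
qed

lemma norm_shifted_pole_diff_le:
  assumes "j < m" "l < m" "l \<noteq> j"
  shows "cmod (of_nat (alpha l) / (x j - r l) - of_nat (alpha l) / (x j - x l))
       \<le> real (alpha l) * (c * t / D^2)"
proof -
  have "x j - r l \<noteq> 0" "x j - x l \<noteq> 0"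
    using x_ne_r x_ne_x assms by auto
  then have "of_nat (alpha l) / (x j - r l) - of_nat (alpha l) / (x j - x l)
      = - (of_nat (alpha l) * (x l - r l)) / ((x j - r l) * (x j - x l))"
    by (simp add: field_simps)
  then have "cmod (of_nat (alpha l) / (x j - r l) - of_nat (alpha l) / (x j - x l))
      = real (alpha l) * cmod (x l - r l) / (cmod (x j - r l) * cmod (x j - x l))"
    by (simp add: norm_mult norm_divide)
  also have "\<dots> \<le> real (alpha l) * (c * t) / (D * D)"
    using err_le[of l] sep_xr[of j l] sep_xx[of j l] assms D_pos c_pos t_pos
    by (intro frac_le mult_left_mono mult_mono) auto
  finally show ?thesis
    by (simp add: power2_eq_square)
qed

lemma norm_sfun_defect_le:
  assumes "j < m"
  shows "cmod (sfun_defect m alpha r x j) \<le> real n * (c / D)^2 * t^2"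
proof -
  have pole_diffs: "cmod (\<Sum>l\<in>{..<m}-{j}. of_nat (alpha l) / (x j - r l) - of_nat (alpha l) / (x j - x l))
      \<le> real n * (c * t / D^2)"
    using norm_shifted_pole_diff_le assms c_pos t_pos by (intro norm_weighted_sum_le) auto
  have "cmod (x j - r j) / real (alpha j) \<le> cmod (x j - r j) / 1"
    using alpha_pos[OF assms] by (intro divide_left_mono) auto
  then have e: "cmod (x j - r j) / real (alpha j) \<le> c * t"
    using err_le[OF assms] by simp
  have "cmod (sfun_defect m alpha r x j) = cmod (x j - r j) / real (alpha j) *
      cmod (\<Sum>l\<in>{..<m}-{j}. of_nat (alpha l) / (x j - r l) - of_nat (alpha l) / (x j - x l))"
    unfolding sfun_defect_def by (simp add: norm_mult norm_divide)
  also have "\<dots> \<le> (c * t) * (real n * (c * t / D^2))"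
    using e pole_diffs c_pos t_pos by (intro mult_mono) auto
  also have "\<dots> = real n * (c / D)^2 * t^2"
    by (simp add: power2_eq_square)
  finally show ?thesis .
qed

lemma norm_defect_power_sub_one_le:
  assumes "j < m"
  shows "cmod ((1 + sfun_defect m alpha r x j) ^ (alpha j - 1) - 1) \<le> t * N"
proof -
  let ?u = "real n * (c / D)^2"
  have "cmod ((1 + sfun_defect m alpha r x j) ^ (alpha j - 1) - 1) \<le> (1 + ?u * t^2) ^ (alpha j - 1) - 1"
    by (rule norm_power_sub_one_le) (simp add: norm_sfun_defect_le[OF assms])
  also have "\<dots> \<le> (1 + t * ?u) ^ (n - 1) - 1"
  proof -
    have "?u * t^2 \<le> ?u * t"
      using t_pos t_le1 by (intro mult_left_mono) (auto simp: power2_eq_square)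
    have "(1 + ?u * t^2) ^ (alpha j - 1) \<le> (1 + ?u * t^2) ^ (n - 1)"
      using alpha_le_n[OF assms] by (intro power_increasing) auto
    also have "\<dots> \<le> (1 + t * ?u) ^ (n - 1)"
      using \<open>?u * t^2 \<le> ?u * t\<close> by (intro power_mono) (auto simp: mult.commute)
    finally show ?thesis
      by simp
  qed
  also have "\<dots> \<le> t * N"
    using one_plus_scaled_power_le[of ?u t "n - 1"] t_pos t_le1 unfolding N_def by simp
  finally show ?thesis .
qed

lemma norm_cofactor_ratio_sub_one_le:
  assumes "j < m"
  shows "cmod (cofactor_ratio m alpha r x j - 1) \<le> t * M"
proof -
  have factor: "cmod ((x j - r l) / (x j - x l) - 1) \<le> t * (c / D)" if "l \<in> {..<m}-{j}" for l
  proof -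
    have "x j - x l \<noteq> 0"
      using x_ne_x assms that by auto
    then have "(x j - r l) / (x j - x l) - 1 = (x l - r l) / (x j - x l)"
      by (simp add: field_simps)
    then have "cmod ((x j - r l) / (x j - x l) - 1) = cmod (x l - r l) / cmod (x j - x l)"
      by (simp add: norm_divide)
    also have "\<dots> \<le> (c * t) / D"
      using that err_le sep_xx assms D_pos c_pos t_pos by (intro frac_le) auto
    finally show ?thesis
      by (simp add: ac_simps)
  qed
  have "cmod (cofactor_ratio m alpha r x j - 1)
      \<le> (\<Prod>l\<in>{..<m}-{j}. 1 + ((1 + t * (c / D)) ^ alpha l - 1)) - 1"
    unfolding cofactor_ratio_def using factor by (intro norm_prod_sub_one_le norm_power_sub_one_le) auto
  also have "\<dots> = (1 + t * (c / D)) ^ (\<Sum>l\<in>{..<m}-{j}. alpha l) - 1"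
    by (simp add: power_sum)
  also have "\<dots> \<le> (1 + t * (c / D)) ^ n - 1"
    using sum_alpha_other_le c_pos t_pos D_pos by (simp add: power_increasing)
  also have "\<dots> \<le> t * M"
    using one_plus_scaled_power_le[of "c / D" t n] c_pos D_pos t_pos t_le1 unfolding M_def by simp
  finally show ?thesis .
qed

lemma norm_root_offset_error_le:
  assumes "j < m"
  shows "cmod (root_offset A m alpha x j - (x j - r j)) \<le> c * t^2 * (N + M + N * M)"
proof -
  let ?P = "(1 + sfun_defect m alpha r x j) ^ (alpha j - 1) * cofactor_ratio m alpha r x j"
  have "cmod (?P - 1) \<le> (1 + t * N) * (1 + t * M) - 1"
    using norm_defect_power_sub_one_le[OF assms] norm_cofactor_ratio_sub_one_le[OF assms]
    by (rule norm_mult_sub_one_le)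
  also have "\<dots> \<le> t * (N + M + N * M)"
  proof -
    have "t * (t * (N * M)) \<le> t * (N * M)"
      using t_pos t_le1 M_nonneg N_nonneg by (simp add: mult_left_le_one_le)
    then show ?thesis
      by (simp add: algebra_simps)
  qed
  finally have P: "cmod (?P - 1) \<le> t * (N + M + N * M)" .
  have "root_offset A m alpha x j - (x j - r j) = (x j - r j) * (?P - 1)"
    unfolding root_offset_eq[OF assms] by (simp add: algebra_simps)
  then have "cmod (root_offset A m alpha x j - (x j - r j)) = cmod (x j - r j) * cmod (?P - 1)"
    by (simp add: norm_mult)
  also have "\<dots> \<le> (c * t) * (t * (N + M + N * M))"
    using err_le[OF assms] P c_pos t_pos by (intro mult_mono) auto
  finally show ?thesis
    by (simp add: power2_eq_square algebra_simps)
qed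

lemma corr_eq:
  assumes "i < m"
  shows "corr A m alpha i x = of_nat (alpha i) / (x i - r i) + corr_remainder A m alpha r x i"
proof -
  have "of_nat (alpha j) / (x i - r j) - of_nat (alpha j) / (x i - x j)
        + of_nat (alpha j) * inverse ((x j - x i) ^ 2) * poly A (x j)
          * (Sfun A m alpha j x (x j) / of_nat (alpha j)) ^ (alpha j - 1)
          / poly (Qpoly m alpha j x) (x j)
      = of_nat (alpha j) / (x i - x j)^2
          * (root_offset A m alpha x j - (x j - r j) + (x j - r j)^2 / (x i - r j))"
    if "j \<in> {..<m}-{i}" for j
  proof -
    have "x i - x j \<noteq> 0" "(x i - x j) + (x j - r j) \<noteq> 0"
      using x_ne_r x_ne_x assms that by auto
    from pole_shift_expansion[OF this, of "of_nat (alpha j)" "root_offset A m alpha x j"]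
    show ?thesis
      unfolding root_offset_def by (simp add: power2_commute divide_inverse mult.assoc)
  qed
  then show ?thesis
    unfolding corr_def Sfun_eq[OF assms] corr_remainder_def
    by (simp add: sum.distrib[symmetric] add.assoc)
qed

lemma norm_corr_remainder_le:
  assumes "i < m"
  shows "cmod (corr_remainder A m alpha r x i) \<le> real n * (c * t^2 * (N + M + N * M + c / D) / D^2)"
  unfolding corr_remainder_def
proof (rule norm_weighted_sum_le)
  fix j assume j: "j \<in> {..<m}-{i}"
  have dxx: "D \<le> cmod (x i - x j)" and dxr: "D \<le> cmod (x i - r j)"
    using sep_xx sep_xr assms j by auto
  have "cmod ((x j - r j)^2 / (x i - r j)) \<le> (c * t)^2 / D"
    unfolding norm_divide norm_power
    using err_le[of j] j dxr D_pos by (intro frac_le power_mono) auto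
  then have "cmod (root_offset A m alpha x j - (x j - r j) + (x j - r j)^2 / (x i - r j))
      \<le> c * t^2 * (N + M + N * M) + (c * t)^2 / D"
    using norm_root_offset_error_le[of j] j by (intro norm_triangle_le add_mono) auto
  also have "\<dots> = c * t^2 * (N + M + N * M + c / D)"
    by (simp add: power2_eq_square field_simps)
  finally have bracket: "cmod (root_offset A m alpha x j - (x j - r j) + (x j - r j)^2 / (x i - r j))
      \<le> c * t^2 * (N + M + N * M + c / D)" .
  have "real (alpha j) / cmod (x i - x j)^2 \<le> real (alpha j) / D^2"
    using dxx D_pos by (intro divide_left_mono power_mono mult_pos_pos) auto
  have "cmod (of_nat (alpha j) / (x i - x j)^2
      * (root_offset A m alpha x j - (x j - r j) + (x j - r j)^2 / (x i - r j)))
    = real (alpha j) / cmod (x i - x j)^2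
      * cmod (root_offset A m alpha x j - (x j - r j) + (x j - r j)^2 / (x i - r j))"
    by (simp add: norm_mult norm_divide norm_power)
  also have "\<dots> \<le> real (alpha j) / D^2 * (c * t^2 * (N + M + N * M + c / D))"
    using \<open>real (alpha j) / cmod (x i - x j)^2 \<le> _\<close> bracket D_pos by (intro mult_mono) auto
  finally show "cmod (of_nat (alpha j) / (x i - x j)^2
      * (root_offset A m alpha x j - (x j - r j) + (x j - r j)^2 / (x i - r j)))
    \<le> real (alpha j) * (c * t^2 * (N + M + N * M + c / D) / D^2)"
    by simp
next
  show "0 \<le> c * t^2 * (N + M + N * M + c / D) / D^2"
    using c_pos D_pos M_nonneg N_nonneg by simp
qed

lemma step_error:
  assumes "i < m"
    and "2 * (c^2 * real n / D^2 * (c / D + (N + M + N * M))) < real (alpha i)"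
  shows "cmod (step A m alpha x i - r i) < c * t^4"
proof -
  define B where "B = c^2 * real n / D^2 * (c / D + (N + M + N * M))"
  define e where "e = x i - r i"
  define R where "R = corr_remainder A m alpha r x i"
  have "cmod (e * R) \<le> (c * t) * (real n * (c * t^2 * (N + M + N * M + c / D) / D^2))"
    unfolding e_def R_def norm_mult using err_le[OF assms(1)] norm_corr_remainder_le[OF assms(1)] c_pos t_pos
    by (intro mult_mono) auto
  also have "\<dots> = t^3 * B"
    unfolding B_def by (simp add: power2_eq_square power3_eq_cube field_simps)
  finally have eR: "cmod (e * R) \<le> t^3 * B" .
  have "0 \<le> B"
    unfolding B_def using c_pos D_pos M_nonneg N_nonneg by simp
  have "2 * B < real (alpha i)"
    unfolding B_def using assms(2) .
  have "step A m alpha x i - r i = e - of_real (real (alpha i)) * inverse (of_real (real (alpha i)) / e + R)"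
    unfolding step_def corr_eq[OF assms(1)] e_def R_def by simp
  also have "cmod \<dots> \<le> t^3 * cmod e"
    using x_ne_own_root[OF assms(1)] eR \<open>0 \<le> B\<close> \<open>2 * B < _\<close> t_pos t_le1
    unfolding e_def by (intro norm_perturbed_newton_error_le) (auto simp: power_le_one)
  also have "\<dots> < t^3 * (c * t)"
    using err[OF assms(1)] t_pos unfolding e_def by simp
  finally show ?thesis
    by (simp add: power_numeral_reduce algebra_simps)
qed

lemma alpha_bound_imp_step_condition:
  assumes "2 * c^2 * real n * inverse (D^2) * (c / D + (1 + c / D) * (N + M * N + M)) < real (alpha i)"
  shows "2 * (c^2 * real n / D^2 * (c / D + (N + M + N * M))) < real (alpha i)"
proof -
  have "N + M + N * M \<le> (1 + c / D) * (N + M * N + M)"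
    using M_nonneg N_nonneg c_pos D_pos by (simp add: algebra_simps)
  then have "2 * (c^2 * real n / D^2 * (c / D + (N + M + N * M)))
      \<le> 2 * c^2 * real n * inverse (D^2) * (c / D + (1 + c / D) * (N + M * N + M))"
    by (simp add: divide_inverse mult_left_mono)
  with assms show ?thesis
    by linarith
qed

end

lemma Min_pairwise_dist_le:
  fixes r :: "nat \<Rightarrow> 'a::real_normed_vector"
  assumes "i < m" "j < m" "i \<noteq> j"
  shows "Min {norm (r i - r j) | i j. i < m \<and> j < m \<and> i \<noteq> j} \<le> norm (r i - r j)"
proof (rule Min_le)
  have "{norm (r i - r j) | i j. i < m \<and> j < m \<and> i \<noteq> j}
      \<subseteq> (\<lambda>(i, j). norm (r i - r j)) ` ({..<m} \<times> {..<m})"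
    by auto
  then show "finite {norm (r i - r j) | i j. i < m \<and> j < m \<and> i \<noteq> j}"
    by (rule finite_subset) auto
qed (use assms in blast)

lemma perturbed_dist_ge:
  fixes a b y z :: "'a::real_normed_vector"
  assumes "d \<le> norm (a - b)" "norm (y - a) \<le> c" "norm (z - b) \<le> c"
  shows "d - 2 * c \<le> norm (y - z)"
proof -
  have "a - b = (y - z) - (y - a) + (z - b)"
    by (simp add: algebra_simps)
  then have "norm (a - b) \<le> norm ((y - z) - (y - a)) + norm (z - b)"
    by (metis norm_triangle_ineq)
  also have "\<dots> \<le> norm (y - z) + norm (y - a) + norm (z - b)"
    by (rule add_right_mono[OF norm_triangle_ineq4])
  finally have "norm (a - b) \<le> norm (y - z) + norm (y - a) + norm (z - b)" .
  with assms show ?thesis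
    by linarith
qed

lemma approximation_stepI:
  fixes A :: "complex poly" and alpha :: "nat \<Rightarrow> nat" and r x :: "nat \<Rightarrow> complex"
  assumes "\<forall>i<m. alpha i > 0" "n = (\<Sum>i<m. alpha i)" "A = (\<Prod>i<m. [:- r i, 1:] ^ alpha i)"
    and "c > 0" "t > 0" "t \<le> 1" "d - 2 * c > 0"
    and "M = (1 + c / (d - 2 * c)) ^ n - 1"
    and "N = (1 + real n * (c / (d - 2 * c)) ^ 2) ^ (n - 1) - 1"
    and root_sep: "\<And>i j. i < m \<Longrightarrow> j < m \<Longrightarrow> i \<noteq> j \<Longrightarrow> d \<le> cmod (r i - r j)"
    and err: "\<forall>i<m. cmod (x i - r i) < c * t"
    and not_root: "\<forall>i<m. poly A (x i) \<noteq> 0"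
  shows "approximation_step A m n alpha r x c t (d - 2 * c) M N"
proof -
  have "c * t \<le> c"
    using \<open>c > 0\<close> \<open>t \<le> 1\<close> by (simp add: mult_left_le)
  then have close: "cmod (x l - r l) \<le> c" if "l < m" for l
    using err that by force
  have "d - 2 * c \<le> cmod (x i - x j)" "d - 2 * c \<le> cmod (x i - r j)"
    if "i < m" "j < m" "i \<noteq> j" for i j
    using perturbed_dist_ge[OF root_sep[OF that] close[of i]] close[of j] \<open>c > 0\<close> that by auto
  moreover have "x i \<noteq> r i" if "i < m" for i
    using not_root assms(1,3) that by (auto simp: poly_prod_linear_powers_eq_0_iff)
  ultimately show ?thesis
    using assms by unfold_locales auto
qed

theorem mainTheorem1:
  fixes A :: "complex poly" and n m :: nat and alpha :: "nat \<Rightarrow> nat"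
    and r x0 :: "nat \<Rightarrow> complex" and c q d M N :: real
  assumes m2: "m \<ge> 2"
    and roots_distinct: "inj_on r {..<m}"
    and alpha_pos: "\<forall>i<m. alpha i > 0"
    and n_def: "n = (\<Sum>i<m. alpha i)"
    and A_fact: "A = (\<Prod>i<m. [:- r i, 1:] ^ alpha i)"
    and d_def: "d = Min {cmod (r i - r j) | i j. i < m \<and> j < m \<and> i \<noteq> j}"
    and c_pos: "c > 0" and q_pos: "q > 0" and q_lt1: "q < 1"
    and d2c: "d - 2 * c > 0"
    and M_def: "M = (1 + c / (d - 2 * c)) ^ n - 1"
    and N_def: "N = (1 + real n * (c / (d - 2 * c)) ^ 2) ^ (n - 1) - 1"
    and cond: "\<forall>i<m. 2 * c ^ 2 * real n * inverse ((d - 2 * c) ^ 2)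
                 * (c / (d - 2 * c) + (1 + c / (d - 2 * c)) * (N + M * N + M))
               < real (alpha i)"
    and init: "\<forall>i<m. cmod (x0 i - r i) < c * q"
    and defined: "\<forall>k. step_defined A m alpha (iter A m alpha x0 k)"
  shows "\<forall>k. \<forall>i<m. cmod (iter A m alpha x0 k i - r i) < c * q ^ (4 ^ k)"
proof -
  have root_sep: "d \<le> cmod (r i - r j)" if "i < m" "j < m" "i \<noteq> j" for i j
    unfolding d_def using Min_pairwise_dist_le[OF that] .
  have "\<forall>i<m. cmod (iter A m alpha x0 k i - r i) < c * q ^ (4 ^ k)" for k
  proof (induction k)
    case (Suc k)
    let ?x = "iter A m alpha x0 k" and ?t = "q ^ (4 ^ k)"
    have "\<forall>i<m. poly A (?x i) \<noteq> 0"
      using defined unfolding step_defined_def by blast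
    then interpret approximation_step A m n alpha r ?x c ?t "d - 2 * c" M N
      using assms Suc.IH root_sep
      by (intro approximation_stepI) (auto simp: power_le_one)
    have "q ^ 4 ^ Suc k = ?t ^ 4"
      by (simp only: power_Suc2 power_mult)
    then show ?case
      using step_error alpha_bound_imp_step_condition cond by simp
  qed (use init in simp)
  then show ?thesis
    by blast
qed

end
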